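(* Consider the following downlink scheduling model. There are $K$ users and discrete time slots $t=1,2,\dots$ of duration $\Delta_0>0$ on a channel of bandwidth $B>0$. In slot $t$ user $k$ has SNR $\phi_k(t)\ge 0$; for each $k$, $(\phi_k(t))_{t\ge1}$ is an i.i.d. sequence of continuous random variables, and the SNRs of different users are independent. Write $\mathbf{s}(t)=[\phi_1(t),\dots,\phi_K(t)]^{\rm T}$. A scheduling action in slot $t$ is $\mathbf{x}(t)=[x_1(t),\dots,x_K(t)]^{\rm T}$ with $x_k(t)\in\{0,1\}$ for all $k$ and $\sum_{k=1}^K x_k(t)\le 1$. For weights $\mathbf{w}\in\mathbb{R}^K$ with $\mathbf{w}>0$ (componentwise) and $\|\mathbf{w}\|_2=1$, the max-weight scheduler $\mu(\cdot|\mathbf{w})$ chooses in every slot $$\mathbf{x}(t)=\mu(\mathbf{s}(t)|\mathbf{w})\in\arg\max_{\mathbf{x}'}\sum_{k=1}^K x'_k\, w_k\,\Delta_0 B\log_2(1+\phi_k(t))$$ over all admissible actions $\mathbf{x}'$, and its average rates are $r_k^{\sim\mu(\cdot|\mathbf{w})}=\lim_{T\to\infty}\frac1T\sum_{t=1}^T x_k(t)\Delta_0B\log_2(1+\phi_k(t))$, $k=1,\dots,K$. Let the feasible rate region be $$\mathcal{F}=\Big\{\mathbf{r}\in\mathbb{R}^K:\ r_k=\lim_{T\to\infty}\frac1T\sum_{t=1}^T x_k(t)\Delta_0B\log_2(1+\phi_k(t))\ \forall k,\ \text{for some sequence of admissible actions }\mathbf{x}(t)\Big\}.$$ Then for every such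 $\mathbf{w}$, $$\mathbf{r}^{\sim\mu(\cdot|\mathbf{w})}=\arg\max_{\mathbf{r}\in\mathcal{F}}\langle \mathbf{w},\mathbf{r}\rangle .$$
   Context: $\langle\cdot,\cdot\rangle$ is the Euclidean inner product. $\mathbf{w}>0$ means every component is strictly positive. The limits defining average rates are assumed to exist, as in the model. *)

theory Defs
  imports "HOL-Probability.Probability"
begin

definition slot_rate :: "real \<Rightarrow> real \<Rightarrow> real \<Rightarrow> real" where
  "slot_rate \<Delta>0 B phi = \<Delta>0 * B * log 2 (1 + phi)"

definition admissible :: "('k::finite \<Rightarrow> real) \<Rightarrow> bool" where
  "admissible x \<longleftrightarrow> (\<forall>k. x k \<in> {0, 1}) \<and> (\<Sum>k\<in>UNIV. x k) \<le> 1"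

definition sched_obj :: "real \<Rightarrow> real \<Rightarrow> ('k::finite \<Rightarrow> real) \<Rightarrow> ('k \<Rightarrow> real) \<Rightarrow> ('k \<Rightarrow> real) \<Rightarrow> real" where
  "sched_obj \<Delta>0 B w s x = (\<Sum>k\<in>UNIV. x k * w k * slot_rate \<Delta>0 B (s k))"

definition max_weight_scheduler ::
  "real \<Rightarrow> real \<Rightarrow> ('k::finite \<Rightarrow> real) \<Rightarrow> (('k \<Rightarrow> real) \<Rightarrow> ('k \<Rightarrow> real)) \<Rightarrow> bool" where
  "max_weight_scheduler \<Delta>0 B w mu \<longleftrightarrow>
     (\<forall>s. admissible (mu s) \<and>
          (\<forall>x'. admissible x' \<longrightarrow> sched_obj \<Delta>0 B w s x' \<le> sched_obj \<Delta>0 B w s (mu s)))"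

definition avg_rate :: "real \<Rightarrow> real \<Rightarrow> (nat \<Rightarrow> 'k \<Rightarrow> real) \<Rightarrow> ('k \<Rightarrow> nat \<Rightarrow> real) \<Rightarrow> 'k \<Rightarrow> nat \<Rightarrow> real" where
  "avg_rate \<Delta>0 B x phi k T = (\<Sum>t=1..T. x t k * slot_rate \<Delta>0 B (phi k t)) / real T"

text \<open>Feasible rate region along the sample path phi.\<close>
definition feasible_region :: "real \<Rightarrow> real \<Rightarrow> ('k::finite \<Rightarrow> nat \<Rightarrow> real) \<Rightarrow> ('k \<Rightarrow> real) set" where
  "feasible_region \<Delta>0 B phi =
     {r. \<exists>x. (\<forall>t. admissible (x t)) \<and> (\<forall>k. avg_rate \<Delta>0 B x phi k \<longlonglongrightarrow> r k)}"

definition argmax_inner :: "('k::finite \<Rightarrow> real) \<Rightarrow> ('k \<Rightarrow> real) set \<Rightarrow> ('k \<Rightarrow> real) set" where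
  "argmax_inner w F = {r \<in> F. \<forall>r'\<in>F. (\<Sum>k\<in>UNIV. w k * r' k) \<le> (\<Sum>k\<in>UNIV. w k * r k)}"

end

theory Submission
  imports Defs
begin

text \<open>
  Fix a sample path. In slot \<open>t\<close> an admissible action earns at most
  \<open>v(t) = max(0, max\<^sub>k w\<^sub>k R\<^sub>k(t))\<close>, and the max-weight action earns exactly \<open>v(t)\<close>.
  Hence \<open>\<langle>w, r\<rangle> \<le> lim avg v\<close> for every feasible \<open>r\<close>, with equality for the max-weight rates
  \<open>r\<^sup>*\<close>, which are therefore optimal.

  For uniqueness, let the schedule \<open>x\<close> achieve an optimal \<open>r\<close>; then on average \<open>x\<close> loses nothing
  against \<open>v\<close>. In a slot where \<open>x\<close> differs from the max-weight action, either \<open>v\<close> exceeds \<open>2L\<close>,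
  or \<open>x\<close> loses at least \<open>\<eta>\<close>, or \<open>v < \<eta>\<close>, or two users have weighted rates less than \<open>\<eta>\<close> apart.
  Averaging, \<open>w\<^sub>k |r\<^sub>k - r\<^sup>*\<^sub>k|\<close> is at most twice the mean excess of \<open>v\<close> over its truncation at \<open>L\<close>,
  plus \<open>\<eta>\<close>, plus \<open>2L\<close> times the frequency of near ties. Because the slots are i.i.d., these time
  averages converge almost surely to expectations (a strong law for bounded variables via Hoeffding's
  inequality and Borel-Cantelli, extended to \<open>v\<close> by truncation). Near ties become rare as \<open>\<eta> \<rightarrow> 0\<close>,
  since two independent users, one with a continuous SNR distribution, tie with probability zero.
  Letting \<open>\<eta> \<rightarrow> 0\<close> and then \<open>L \<rightarrow> \<infinity>\<close> gives \<open>r = r\<^sup>*\<close>.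
\<close>

section \<open>Admissible actions and the max-weight value\<close>

lemma admissible_cases:
  fixes x :: "'k::finite \<Rightarrow> real"
  assumes "admissible x"
  obtains "x = (\<lambda>_. 0)" | j where "x = (\<lambda>k. if k = j then 1 else 0)"
proof (cases "\<exists>j. x j = 1")
  case False
  then have "x = (\<lambda>_. 0)" using assms by (auto simp: admissible_def fun_eq_iff)
  then show ?thesis using that by blast
next
  case True
  then obtain j where j: "x j = 1" by blast
  have "x k = 0" if "k \<noteq> j" for k
  proof (rule ccontr)
    assume "x k \<noteq> 0"
    then have xk: "x k = 1" using assms by (auto simp: admissible_def)
    have "x i \<ge> 0" for i
      using assms unfolding admissible_def by (metis empty_iff insert_iff order_refl zero_le_one)
    then have "(\<Sum>i\<in>{j, k}. x i) \<le> (\<Sum>i\<in>UNIV. x i)" by (intro sum_mono2) auto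
    then show False using j xk that assms by (auto simp: admissible_def)
  qed
  then have "x = (\<lambda>k. if k = j then 1 else 0)" using j by (auto simp: fun_eq_iff)
  then show ?thesis using that by blast
qed

lemma admissible_zero: "admissible (\<lambda>_::'k::finite. 0::real)"
  by (simp add: admissible_def)

lemma admissible_single: "admissible (\<lambda>k::'k::finite. if k = j then 1 else 0::real)"
  by (simp add: admissible_def)

lemma sched_obj_zero: "sched_obj D B w s (\<lambda>_. 0) = 0"
  by (simp add: sched_obj_def)

lemma sched_obj_single: "sched_obj D B w s (\<lambda>k. if k = j then 1 else 0) = w j * slot_rate D B (s j)"
proof -
  have "(if k = j then 1 else 0) * w k * slot_rate D B (s k) = (if k = j then w j * slot_rate D B (s j) else 0)" for k
    by simp
  then show ?thesis by (simp add: sched_obj_def)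
qed

definition max_weight_value :: "real \<Rightarrow> real \<Rightarrow> ('k::finite \<Rightarrow> real) \<Rightarrow> ('k \<Rightarrow> real) \<Rightarrow> real" where
  "max_weight_value D B w s = Max (insert 0 (range (\<lambda>k. w k * slot_rate D B (s k))))"

lemma sched_obj_mem_values:
  assumes "admissible x"
  shows "sched_obj D B w s x \<in> insert 0 (range (\<lambda>k. w k * slot_rate D B (s k)))"
  using assms by (cases rule: admissible_cases) (simp_all add: sched_obj_zero sched_obj_single)

lemma sched_obj_le_max_weight_value: "admissible x \<Longrightarrow> sched_obj D B w s x \<le> max_weight_value D B w s"
  unfolding max_weight_value_def by (intro Max_ge sched_obj_mem_values) auto

lemma max_weight_value_nonneg: "0 \<le> max_weight_value D B w s"
  unfolding max_weight_value_def by (rule Max_ge) auto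

lemma weighted_slot_rate_le_max_weight_value: "w k * slot_rate D B (s k) \<le> max_weight_value D B w s"
  unfolding max_weight_value_def by (rule Max_ge) auto

lemma max_weight_scheduler_value:
  assumes "max_weight_scheduler D B w mu"
  shows "sched_obj D B w s (mu s) = max_weight_value D B w s"
proof -
  have adm: "admissible (mu s)"
    and opt: "\<And>x. admissible x \<Longrightarrow> sched_obj D B w s x \<le> sched_obj D B w s (mu s)"
    using assms by (auto simp: max_weight_scheduler_def)
  show ?thesis unfolding max_weight_value_def
  proof (rule Max_eqI[symmetric])
    show "sched_obj D B w s (mu s) \<in> insert 0 (range (\<lambda>k. w k * slot_rate D B (s k)))"
      using adm by (rule sched_obj_mem_values)
  qed (use opt[OF admissible_zero] opt[OF admissible_single] in \<open>auto simp: sched_obj_zero sched_obj_single\<close>)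
qed

lemma borel_measurable_max_weight_value:
  "max_weight_value D B w \<in> borel_measurable (PiM (UNIV::'k::finite set) (\<lambda>_. borel))"
proof -
  have "max_weight_value D B w = (\<lambda>s. max 0 (Max (range (\<lambda>k::'k. w k * slot_rate D B (s k)))))"
    unfolding max_weight_value_def by (subst Max_insert) auto
  then show ?thesis unfolding slot_rate_def by simp measurable
qed

definition near_tie :: "real \<Rightarrow> real \<Rightarrow> ('k \<Rightarrow> real) \<Rightarrow> real \<Rightarrow> ('k \<Rightarrow> real) \<Rightarrow> bool" where
  "near_tie D B w \<eta> s \<longleftrightarrow>
     (\<exists>i j. i \<noteq> j \<and> \<bar>w i * slot_rate D B (s i) - w j * slot_rate D B (s j)\<bar> < \<eta>)"

lemma pred_near_tie: "Measurable.pred (PiM (UNIV::'k::finite set) (\<lambda>_. borel)) (near_tie D B w \<eta>)"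
  unfolding near_tie_def slot_rate_def by measurable

lemma slot_rate_nonneg: "0 \<le> D \<Longrightarrow> 0 \<le> B \<Longrightarrow> 0 \<le> y \<Longrightarrow> 0 \<le> slot_rate D B y"
  by (simp add: slot_rate_def)

lemma slot_rate_inj:
  assumes "0 < D" "0 < B" "-1 < y" "-1 < y'" "slot_rate D B y = slot_rate D B y'"
  shows "y = y'"
proof -
  have "log 2 (1 + y) = log 2 (1 + y')" using assms by (simp add: slot_rate_def)
  then have "1 + y = 1 + y'" using assms(3,4) inj_onD[OF log_inj[of 2], of "1 + y" "1 + y'"] by simp
  then show ?thesis by simp
qed

lemma abs_diff_scheduled_rate_le:
  assumes "0 \<le> D" "0 \<le> B" "0 < w k" "0 \<le> s k" "admissible x" "admissible y"
  shows "\<bar>x k * slot_rate D B (s k) - y k * slot_rate D B (s k)\<bar> \<le> max_weight_value D B w s / w k"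
proof -
  have "x k \<in> {0, 1}" "y k \<in> {0, 1}" using assms(5,6) by (auto simp: admissible_def)
  moreover have "0 \<le> slot_rate D B (s k)" using assms(1,2,4) by (rule slot_rate_nonneg)
  moreover have "slot_rate D B (s k) \<le> max_weight_value D B w s / w k"
    using weighted_slot_rate_le_max_weight_value[of w k D B s] assms(3)
    by (simp add: field_simps mult.commute)
  ultimately show ?thesis by auto
qed

lemma near_tie_of_actions_differ:
  assumes "admissible x" "admissible y" "x \<noteq> y"
    and y_opt: "sched_obj D B w s y = max_weight_value D B w s"
    and "max_weight_value D B w s - sched_obj D B w s x < \<eta>" "\<eta> \<le> max_weight_value D B w s"
  shows "near_tie D B w \<eta> s"
proof -
  from assms(1) obtain j where x: "x = (\<lambda>k. if k = j then 1 else 0)"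
    by (cases rule: admissible_cases) (use assms(5,6) in \<open>simp_all add: sched_obj_zero\<close>)
  from assms(2) obtain i where y: "y = (\<lambda>k. if k = i then 1 else 0)"
    by (cases rule: admissible_cases)
       (use assms(5,6) y_opt sched_obj_le_max_weight_value[OF assms(1), of D B w s] in \<open>simp_all add: sched_obj_zero\<close>)
  have "i \<noteq> j" using assms(3) x y by auto
  moreover have "max_weight_value D B w s = w i * slot_rate D B (s i)"
    using y_opt y by (simp add: sched_obj_single)
  moreover have "sched_obj D B w s x = w j * slot_rate D B (s j)"
    using x by (simp add: sched_obj_single)
  ultimately show ?thesis
    unfolding near_tie_def using assms(5) weighted_slot_rate_le_max_weight_value[of w j D B s]
    by (intro exI[of _ i] exI[of _ j]) auto
qed

lemma max_weight_value_le_of_actions_differ: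
  assumes "admissible x" "admissible y" "x \<noteq> y"
    and y_opt: "sched_obj D B w s y = max_weight_value D B w s"
    and "0 \<le> L" "0 < \<eta>"
  defines "v \<equiv> max_weight_value D B w s"
  shows "v \<le> 2 * (v - min v L) + 2 * L * (v - sched_obj D B w s x) / \<eta> + \<eta>
              + 2 * L * of_bool (near_tie D B w \<eta> s)"
proof -
  define d where "d = v - sched_obj D B w s x"
  have "0 \<le> d" using sched_obj_le_max_weight_value[OF assms(1)] by (simp add: d_def v_def)
  then have nonneg: "0 \<le> 2 * L * d / \<eta>" "0 \<le> 2 * L * of_bool (near_tie D B w \<eta> s)"
    using assms(5,6) by auto
  have "min v L \<le> v" by simp
  consider "2 * L < v" | "v \<le> 2 * L" "\<eta> \<le> d" | "v < \<eta>" | "v \<le> 2 * L" "d < \<eta>" "\<eta> \<le> v"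
    by linarith
  then have "v \<le> 2 * (v - min v L) + 2 * L * d / \<eta> + \<eta> + 2 * L * of_bool (near_tie D B w \<eta> s)"
  proof cases
    case 1
    then show ?thesis using nonneg assms(6) by (simp add: min_def)
  next
    case 2
    then have "2 * L \<le> 2 * L * d / \<eta>" using assms(5,6) by (simp add: field_simps mult_left_mono)
    then show ?thesis using 2 nonneg assms(6) \<open>min v L \<le> v\<close> by (smt (verit))
  next
    case 3
    then show ?thesis using nonneg \<open>min v L \<le> v\<close> by (smt (verit))
  next
    case 4
    then have "near_tie D B w \<eta> s"
      using near_tie_of_actions_differ[OF assms(1-3) y_opt] by (simp add: d_def v_def)
    then have "2 * L * of_bool (near_tie D B w \<eta> s) = 2 * L" by simp
    with 4 nonneg assms(6) \<open>min v L \<le> v\<close> show ?thesis by (smt (verit))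
  qed
  then show ?thesis by (simp add: d_def)
qed

lemma scheduled_rate_gap_le:
  assumes "0 \<le> D" "0 \<le> B" "0 < w k" "0 \<le> s k" "admissible x" "admissible y"
    and y_opt: "sched_obj D B w s y = max_weight_value D B w s"
    and "0 \<le> L" "0 < \<eta>"
  defines "v \<equiv> max_weight_value D B w s"
  shows "\<bar>x k * slot_rate D B (s k) - y k * slot_rate D B (s k)\<bar>
    \<le> (2 * (v - min v L) + 2 * L * (v - sched_obj D B w s x) / \<eta> + \<eta>
        + 2 * L * of_bool (near_tie D B w \<eta> s)) / w k"
proof (cases "x = y")
  case True
  have "0 \<le> v - sched_obj D B w s x" using sched_obj_le_max_weight_value[OF assms(5)] by (simp add: v_def)
  then show ?thesis using True assms(3,8,9) by simp
next
  case False
  then show ?thesis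
    using abs_diff_scheduled_rate_le[of D B w k s x y] assms(1-6)
      max_weight_value_le_of_actions_differ[OF assms(5,6) False y_opt assms(8,9)]
    unfolding v_def by (smt (verit) divide_right_mono)
qed

section \<open>Time averages\<close>

definition time_avg :: "(nat \<Rightarrow> real) \<Rightarrow> nat \<Rightarrow> real" where
  "time_avg f T = (\<Sum>t=1..T. f t) / real T"

lemma avg_rate_eq_time_avg: "avg_rate D B x phi k = time_avg (\<lambda>t. x t k * slot_rate D B (phi k t))"
  by (simp add: fun_eq_iff avg_rate_def time_avg_def)

lemma time_avg_mono: "(\<And>t. 1 \<le> t \<Longrightarrow> f t \<le> g t) \<Longrightarrow> time_avg f T \<le> time_avg g T"
  unfolding time_avg_def by (intro divide_right_mono sum_mono) auto

lemma time_avg_add: "time_avg (\<lambda>t. f t + g t) T = time_avg f T + time_avg g T"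
  by (simp add: time_avg_def sum.distrib add_divide_distrib)

lemma time_avg_diff: "time_avg (\<lambda>t. f t - g t) T = time_avg f T - time_avg g T"
  by (simp add: time_avg_def sum_subtractf diff_divide_distrib)

lemma time_avg_mult: "time_avg (\<lambda>t. c * f t) T = c * time_avg f T"
  by (simp add: time_avg_def sum_distrib_left)

lemma time_avg_divide: "time_avg (\<lambda>t. f t / c) T = time_avg f T / c"
  by (simp add: time_avg_def sum_divide_distrib[symmetric])

lemma time_avg_const: "1 \<le> T \<Longrightarrow> time_avg (\<lambda>_. c) T = c"
  by (simp add: time_avg_def)

lemma time_avg_sum: "time_avg (\<lambda>t. \<Sum>k\<in>A. f k t) T = (\<Sum>k\<in>A. time_avg (f k) T)"
  unfolding time_avg_def by (subst sum.swap) (simp add: sum_divide_distrib)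

lemma abs_time_avg_diff_le: "\<bar>time_avg f T - time_avg g T\<bar> \<le> time_avg (\<lambda>t. \<bar>f t - g t\<bar>) T"
  unfolding time_avg_diff[symmetric] unfolding time_avg_def
  by (simp add: abs_divide divide_right_mono sum_abs)

section \<open>Optimality along a sample path\<close>

lemma time_avg_sched_obj:
  "time_avg (\<lambda>t. sched_obj D B w (\<lambda>j. phi j t) (x t)) T = (\<Sum>k\<in>UNIV. w k * avg_rate D B x phi k T)"
  unfolding sched_obj_def time_avg_sum avg_rate_eq_time_avg time_avg_mult[symmetric]
  by (simp add: mult_ac)

lemma tendsto_time_avg_sched_obj:
  assumes "\<And>k. avg_rate D B x phi k \<longlonglongrightarrow> r k"
  shows "time_avg (\<lambda>t. sched_obj D B w (\<lambda>j. phi j t) (x t)) \<longlonglongrightarrow> (\<Sum>k\<in>UNIV. w k * r k)"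
  unfolding time_avg_sched_obj by (intro tendsto_intros assms)

lemma convergent_time_avg_max_weight_value:
  assumes mw: "max_weight_scheduler D B w mu"
    and conv: "\<forall>k. convergent (avg_rate D B (\<lambda>t. mu (\<lambda>j. phi j t)) phi k)"
  shows "convergent (time_avg (\<lambda>t. max_weight_value D B w (\<lambda>j. phi j t)))"
proof -
  have "time_avg (\<lambda>t. sched_obj D B w (\<lambda>j. phi j t) (mu (\<lambda>j. phi j t)))
      \<longlonglongrightarrow> (\<Sum>k\<in>UNIV. w k * lim (avg_rate D B (\<lambda>t. mu (\<lambda>j. phi j t)) phi k))"
    using conv by (intro tendsto_time_avg_sched_obj) (simp add: convergent_LIMSEQ_iff)
  then show ?thesis
    unfolding max_weight_scheduler_value[OF mw] by (rule convergentI)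
qed

lemma feasible_weighted_rate_le:
  assumes "r \<in> feasible_region D B phi"
    and "time_avg (\<lambda>t. max_weight_value D B w (\<lambda>j. phi j t)) \<longlonglongrightarrow> v"
  shows "(\<Sum>k\<in>UNIV. w k * r k) \<le> v"
proof -
  obtain x where "\<And>t. admissible (x t)" and "\<And>k. avg_rate D B x phi k \<longlonglongrightarrow> r k"
    using assms(1) unfolding feasible_region_def by blast
  then show ?thesis
    by (intro LIMSEQ_le[OF tendsto_time_avg_sched_obj assms(2)])
       (auto intro!: time_avg_mono sched_obj_le_max_weight_value)
qed

lemma optimal_rate_dist_le:
  fixes phi :: "'k::finite \<Rightarrow> nat \<Rightarrow> real" and x y :: "nat \<Rightarrow> 'k \<Rightarrow> real"
  assumes "0 \<le> D" "0 \<le> B" "0 < w k" "\<And>t. 1 \<le> t \<Longrightarrow> 0 \<le> phi k t"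
    and x: "\<And>t. admissible (x t)" "\<And>j. avg_rate D B x phi j \<longlonglongrightarrow> r j"
    and y: "\<And>t. admissible (y t)" "avg_rate D B y phi k \<longlonglongrightarrow> r' k"
    and y_opt: "\<And>t. sched_obj D B w (\<lambda>j. phi j t) (y t) = max_weight_value D B w (\<lambda>j. phi j t)"
    and max_value: "time_avg (\<lambda>t. max_weight_value D B w (\<lambda>j. phi j t)) \<longlonglongrightarrow> (\<Sum>j\<in>UNIV. w j * r j)"
    and trunc: "time_avg (\<lambda>t. min (max_weight_value D B w (\<lambda>j. phi j t)) L) \<longlonglongrightarrow> m"
    and ties: "time_avg (\<lambda>t. of_bool (near_tie D B w \<eta> (\<lambda>j. phi j t))) \<longlonglongrightarrow> p"
    and "0 \<le> L" "0 < \<eta>"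
  shows "\<bar>r k - r' k\<bar> \<le> (2 * ((\<Sum>j\<in>UNIV. w j * r j) - m) + \<eta> + 2 * L * p) / w k"
proof (rule LIMSEQ_le)
  define v where "v t = max_weight_value D B w (\<lambda>j. phi j t)" for t
  define obj where "obj t = sched_obj D B w (\<lambda>j. phi j t) (x t)" for t
  define tie where "tie t = (of_bool (near_tie D B w \<eta> (\<lambda>j. phi j t)) :: real)" for t
  define g where "g t = (2 * (v t - min (v t) L) + 2 * L * (v t - obj t) / \<eta> + \<eta> + 2 * L * tie t) / w k" for t
  show "(\<lambda>T. \<bar>avg_rate D B x phi k T - avg_rate D B y phi k T\<bar>) \<longlonglongrightarrow> \<bar>r k - r' k\<bar>"
    using x(2) y(2) by (intro tendsto_intros)
  have "time_avg g T = (2 * (time_avg v T - time_avg (\<lambda>t. min (v t) L) T)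
      + 2 * L * (time_avg v T - time_avg obj T) / \<eta> + \<eta> + 2 * L * time_avg tie T) / w k" if "1 \<le> T" for T
    using that unfolding g_def
    by (simp add: time_avg_add time_avg_diff time_avg_mult time_avg_divide time_avg_const)
  moreover have "(\<lambda>T. (2 * (time_avg v T - time_avg (\<lambda>t. min (v t) L) T)
      + 2 * L * (time_avg v T - time_avg obj T) / \<eta> + \<eta> + 2 * L * time_avg tie T) / w k)
    \<longlonglongrightarrow> (2 * ((\<Sum>j\<in>UNIV. w j * r j) - m) + 2 * L * ((\<Sum>j\<in>UNIV. w j * r j) - (\<Sum>j\<in>UNIV. w j * r j)) / \<eta>
        + \<eta> + 2 * L * p) / w k"
    unfolding v_def obj_def tie_def using max_value trunc ties tendsto_time_avg_sched_obj[OF x(2)] assms(3) \<open>0 < \<eta>\<close>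
    by (intro tendsto_intros) auto
  ultimately show "time_avg g \<longlonglongrightarrow> (2 * ((\<Sum>j\<in>UNIV. w j * r j) - m) + \<eta> + 2 * L * p) / w k"
    by (auto elim!: Lim_transform_eventually simp: eventually_sequentially intro!: exI[of _ 1])
  have "\<bar>avg_rate D B x phi k T - avg_rate D B y phi k T\<bar> \<le> time_avg g T" for T
    unfolding avg_rate_eq_time_avg
  proof (rule order.trans[OF abs_time_avg_diff_le time_avg_mono])
    fix t :: nat assume "1 \<le> t"
    then show "\<bar>x t k * slot_rate D B (phi k t) - y t k * slot_rate D B (phi k t)\<bar> \<le> g t"
      unfolding g_def v_def obj_def tie_def
      using scheduled_rate_gap_le[OF assms(1-3) _ x(1) y(1) y_opt \<open>0 \<le> L\<close> \<open>0 < \<eta>\<close>] assms(4) by simp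
  qed
  then show "\<exists>N. \<forall>T\<ge>N. \<bar>avg_rate D B x phi k T - avg_rate D B y phi k T\<bar> \<le> time_avg g T" by blast
qed

lemma optimal_rate_eq:
  fixes phi :: "'k::finite \<Rightarrow> nat \<Rightarrow> real" and x y :: "nat \<Rightarrow> 'k \<Rightarrow> real" and m :: "nat \<Rightarrow> real"
  assumes "0 \<le> D" "0 \<le> B" "0 < w k" "\<And>t. 1 \<le> t \<Longrightarrow> 0 \<le> phi k t"
    and x: "\<And>t. admissible (x t)" "\<And>j. avg_rate D B x phi j \<longlonglongrightarrow> r j"
    and y: "\<And>t. admissible (y t)" "avg_rate D B y phi k \<longlonglongrightarrow> r' k"
    and y_opt: "\<And>t. sched_obj D B w (\<lambda>j. phi j t) (y t) = max_weight_value D B w (\<lambda>j. phi j t)"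
    and max_value: "time_avg (\<lambda>t. max_weight_value D B w (\<lambda>j. phi j t)) \<longlonglongrightarrow> (\<Sum>j\<in>UNIV. w j * r j)"
    and trunc: "\<And>L::nat. time_avg (\<lambda>t. min (max_weight_value D B w (\<lambda>j. phi j t)) (real L)) \<longlonglongrightarrow> m L"
    and trunc_lim: "m \<longlonglongrightarrow> (\<Sum>j\<in>UNIV. w j * r j)"
    and ties: "\<And>n. time_avg (\<lambda>t. of_bool (near_tie D B w (\<eta> n) (\<lambda>j. phi j t))) \<longlonglongrightarrow> p n"
    and ties_lim: "p \<longlonglongrightarrow> 0" "\<eta> \<longlonglongrightarrow> 0" "\<And>n. 0 < \<eta> n"
  shows "r k = r' k"
proof -
  define opt where "opt = (\<Sum>j\<in>UNIV. w j * r j)"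
  have bound: "\<bar>r k - r' k\<bar> \<le> (2 * (opt - m L) + \<eta> n + 2 * real L * p n) / w k" for L n
    unfolding opt_def
    by (rule optimal_rate_dist_le[where L = "real L" and m = "m L" and \<eta> = "\<eta> n" and p = "p n"])
       (use assms(1-4) x y y_opt max_value trunc ties ties_lim in auto)
  have "(\<lambda>n. (2 * (opt - m L) + \<eta> n + 2 * real L * p n) / w k) \<longlonglongrightarrow> 2 * (opt - m L) / w k" for L
    using assms(3) by (auto intro!: tendsto_eq_intros ties_lim)
  then have bound_L: "\<bar>r k - r' k\<bar> \<le> 2 * (opt - m L) / w k" for L
    by (rule LIMSEQ_le_const) (use bound in blast)
  have "(\<lambda>L. 2 * (opt - m L) / w k) \<longlonglongrightarrow> 2 * (opt - opt) / w k"
    using trunc_lim assms(3) unfolding opt_def by (intro tendsto_intros) auto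
  then have "\<bar>r k - r' k\<bar> \<le> 2 * (opt - opt) / w k"
    by (rule LIMSEQ_le_const) (use bound_L in blast)
  then show ?thesis by simp
qed

theorem argmax_feasible_region_eq_max_weight_rates:
  fixes phi :: "'k::finite \<Rightarrow> nat \<Rightarrow> real" and m :: "nat \<Rightarrow> real"
  assumes "0 < D" "0 < B" "\<And>k. 0 < w k" and mw: "max_weight_scheduler D B w mu"
    and nonneg: "\<And>k t. 1 \<le> t \<Longrightarrow> 0 \<le> phi k t"
    and conv: "\<And>k. convergent (avg_rate D B (\<lambda>t. mu (\<lambda>j. phi j t)) phi k)"
    and max_value: "time_avg (\<lambda>t. max_weight_value D B w (\<lambda>j. phi j t)) \<longlonglongrightarrow> v"
    and trunc: "\<And>L::nat. time_avg (\<lambda>t. min (max_weight_value D B w (\<lambda>j. phi j t)) (real L)) \<longlonglongrightarrow> m L"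
    and trunc_lim: "m \<longlonglongrightarrow> v"
    and ties: "\<And>n. time_avg (\<lambda>t. of_bool (near_tie D B w (\<eta> n) (\<lambda>j. phi j t))) \<longlonglongrightarrow> p n"
    and ties_lim: "p \<longlonglongrightarrow> 0" "\<eta> \<longlonglongrightarrow> 0" "\<And>n. 0 < \<eta> n"
  shows "argmax_inner w (feasible_region D B phi) = {\<lambda>k. lim (avg_rate D B (\<lambda>t. mu (\<lambda>j. phi j t)) phi k)}"
proof -
  define y where "y t = mu (\<lambda>j. phi j t)" for t
  define r' where "r' k = lim (avg_rate D B y phi k)" for k
  have y_lim: "avg_rate D B y phi k \<longlonglongrightarrow> r' k" for k
    using conv unfolding r'_def y_def by (simp add: convergent_LIMSEQ_iff)
  have y_adm: "admissible (y t)" for t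
    using mw by (simp add: y_def max_weight_scheduler_def)
  have y_opt: "sched_obj D B w (\<lambda>j. phi j t) (y t) = max_weight_value D B w (\<lambda>j. phi j t)" for t
    unfolding y_def by (rule max_weight_scheduler_value[OF mw])
  have r'_feasible: "r' \<in> feasible_region D B phi"
    unfolding feasible_region_def using y_adm y_lim by blast
  have "time_avg (\<lambda>t. sched_obj D B w (\<lambda>j. phi j t) (y t)) \<longlonglongrightarrow> v"
    using max_value by (simp add: y_opt)
  with tendsto_time_avg_sched_obj[where w = w, OF y_lim]
  have r'_value: "(\<Sum>k\<in>UNIV. w k * r' k) = v" by (rule LIMSEQ_unique)
  have "r = r'" if r_feasible: "r \<in> feasible_region D B phi"
    and r_opt: "v \<le> (\<Sum>k\<in>UNIV. w k * r k)" for r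
  proof
    fix k
    obtain x where x: "\<And>t. admissible (x t)" "\<And>j. avg_rate D B x phi j \<longlonglongrightarrow> r j"
      using r_feasible unfolding feasible_region_def by blast
    have "v = (\<Sum>k\<in>UNIV. w k * r k)"
      using feasible_weighted_rate_le[OF r_feasible max_value] r_opt by simp
    then show "r k = r' k"
      using optimal_rate_eq[where D = D and B = B and w = w and phi = phi and x = x and y = y and k = k
          and r = r and r' = r' and m = m and \<eta> = \<eta> and p = p, OF _ _ _ _ x y_adm y_lim y_opt _ trunc _ ties ties_lim]
        assms(1-3) nonneg max_value trunc_lim by simp
  qed
  then show ?thesis
    using r'_feasible r'_value feasible_weighted_rate_le[OF _ max_value]
    unfolding argmax_inner_def r'_def y_def by fastforce
qed

section \<open>Strong laws of large numbers\<close>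

lemma distr_comp_eq:
  assumes "X \<in> measurable M N" "Y \<in> measurable M N" "distr M N X = distr M N Y" "f \<in> measurable N K"
  shows "distr M K (\<lambda>\<omega>. f (X \<omega>)) = distr M K (\<lambda>\<omega>. f (Y \<omega>))"
proof -
  have "distr M K (\<lambda>\<omega>. f (Z \<omega>)) = distr (distr M N Z) K f" if "Z \<in> measurable M N" for Z
    using that assms(4) by (simp add: distr_distr comp_def)
  then show ?thesis using assms(1-3) by metis
qed

lemma borel_measurable_time_avg:
  assumes [measurable]: "\<And>t. X t \<in> borel_measurable M"
  shows "(\<lambda>\<omega>. time_avg (\<lambda>t. X t \<omega>) T) \<in> borel_measurable M"
  unfolding time_avg_def by measurable

lemma tendsto_integral_min:
  fixes X :: "'a \<Rightarrow> real"
  assumes "integrable M X"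
  shows "(\<lambda>L::nat. integral\<^sup>L M (\<lambda>\<omega>. min (X \<omega>) (real L))) \<longlonglongrightarrow> integral\<^sup>L M X"
proof (rule integral_dominated_convergence[where w = "\<lambda>\<omega>. \<bar>X \<omega>\<bar>"])
  show "AE \<omega> in M. (\<lambda>L. min (X \<omega>) (real L)) \<longlonglongrightarrow> X \<omega>"
  proof (rule AE_I2, rule Lim_transform_eventually[OF tendsto_const])
    fix \<omega>
    obtain N :: nat where "X \<omega> \<le> real N" using real_arch_simple by blast
    then show "\<forall>\<^sub>F L in sequentially. X \<omega> = min (X \<omega>) (real L)"
      unfolding eventually_sequentially by (intro exI[of _ N]) auto
  qed
qed (use assms in auto)

context prob_space
begin

lemma prob_time_avg_deviation_le:
  fixes Z :: "nat \<Rightarrow> 'a \<Rightarrow> real"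
  assumes indep: "indep_vars (\<lambda>_. borel) Z {1..}"
    and ident: "\<And>t. 1 \<le> t \<Longrightarrow> distr M borel (Z t) = distr M borel (Z 1)"
    and meas: "\<And>t. random_variable borel (Z t)"
    and bounded: "\<And>t \<omega>. \<omega> \<in> space M \<Longrightarrow> Z t \<omega> \<in> {a..b}"
    and "a < b" "0 \<le> \<epsilon>" "1 \<le> T"
  shows "prob {\<omega> \<in> space M. \<epsilon> \<le> \<bar>time_avg (\<lambda>t. Z t \<omega>) T - expectation (Z 1)\<bar>}
           \<le> 2 * exp (- 2 * \<epsilon>\<^sup>2 / (b - a)\<^sup>2) ^ T"
proof -
  interpret Hoeffding_ineq_iid M "{1..T}" Z "Z 1" a b "expectation (Z 1)"
  proof unfold_locales
    show "indep_vars (\<lambda>_. borel) Z {1..T}"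
      by (rule indep_vars_subset[OF indep]) auto
    show "finite {1..T}" by simp
    show "\<And>t. t \<in> {1..T} \<Longrightarrow> distr M borel (Z t) = distr M borel (Z 1)"
      by (rule ident) simp
    show "random_variable borel (Z 1)" by (rule meas)
    show "AE \<omega> in M. Z 1 \<omega> \<in> {a..b}" using bounded by (intro AE_I2)
  qed (rule reflexive)
  have "{\<omega> \<in> space M. \<epsilon> \<le> \<bar>time_avg (\<lambda>t. Z t \<omega>) T - expectation (Z 1)\<bar>}
      = {\<omega> \<in> space M. \<bar>(\<Sum>t\<in>{1..T}. Z t \<omega>) / real (card {1..T}) - expectation (Z 1)\<bar> \<ge> \<epsilon>}"
    by (simp add: time_avg_def)
  also have "prob \<dots> \<le> 2 * exp (- 2 * real (card {1..T}) * \<epsilon>\<^sup>2 / (b - a)\<^sup>2)"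
    by (rule Hoeffding_ineq_abs_ge') (use assms(5-7) in auto)
  also have "\<dots> = 2 * exp (real T * (- 2 * \<epsilon>\<^sup>2 / (b - a)\<^sup>2))"
    by simp
  finally show ?thesis
    by (simp only: exp_of_nat_mult)
qed

lemma AE_eventually_time_avg_close:
  fixes Z :: "nat \<Rightarrow> 'a \<Rightarrow> real"
  assumes indep: "indep_vars (\<lambda>_. borel) Z {1..}"
    and ident: "\<And>t. 1 \<le> t \<Longrightarrow> distr M borel (Z t) = distr M borel (Z 1)"
    and meas: "\<And>t. random_variable borel (Z t)"
    and bounded: "\<And>t \<omega>. \<omega> \<in> space M \<Longrightarrow> Z t \<omega> \<in> {a..b}"
    and "a < b" "0 < \<epsilon>"
  shows "AE \<omega> in M. eventually (\<lambda>T. \<bar>time_avg (\<lambda>t. Z t \<omega>) T - expectation (Z 1)\<bar> < \<epsilon>) sequentially"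
proof -
  define A where "A T = {\<omega> \<in> space M. \<epsilon> \<le> \<bar>time_avg (\<lambda>t. Z t \<omega>) T - expectation (Z 1)\<bar>}" for T
  define q where "q = exp (- 2 * \<epsilon>\<^sup>2 / (b - a)\<^sup>2)"
  have A_sets: "A T \<in> sets M" for T
    unfolding A_def using borel_measurable_time_avg[OF meas] by measurable
  have "q < 1" using assms(5,6) by (simp add: q_def)
  then have "summable (\<lambda>T. 2 * q ^ Suc T)"
    by (intro summable_mult summable_geometric[THEN summable_Suc_iff[THEN iffD2]]) (simp add: q_def)
  moreover have "norm (measure M (A (Suc T))) \<le> 2 * q ^ Suc T" for T
    unfolding A_def q_def using prob_time_avg_deviation_le[OF indep ident meas bounded assms(5), of \<epsilon> "Suc T"] assms(6)
    by simp
  ultimately have "summable (\<lambda>T. measure M (A (Suc T)))"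
    by (rule summable_comparison_test'[where N = 0])
  then have "AE \<omega> in M. eventually (\<lambda>T. \<omega> \<in> space M - A (Suc T)) sequentially"
    by (intro borel_cantelli_AE1) (auto simp: A_sets emeasure_finite less_top[symmetric])
  then show ?thesis
  proof (rule eventually_mono)
    fix \<omega> assume "eventually (\<lambda>T. \<omega> \<in> space M - A (Suc T)) sequentially"
    then obtain N where N: "\<And>T. N \<le> T \<Longrightarrow> \<omega> \<in> space M - A (Suc T)"
      by (auto simp: eventually_sequentially)
    show "eventually (\<lambda>T. \<bar>time_avg (\<lambda>t. Z t \<omega>) T - expectation (Z 1)\<bar> < \<epsilon>) sequentially"
      unfolding eventually_sequentially
    proof (intro exI allI impI)
      fix T assume "Suc N \<le> T"
      then obtain n where "T = Suc n" "N \<le> n" by (cases T) auto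
      then show "\<bar>time_avg (\<lambda>t. Z t \<omega>) T - expectation (Z 1)\<bar> < \<epsilon>"
        using N[of n] by (auto simp: A_def not_le)
    qed
  qed
qed

theorem slln_bounded:
  fixes Z :: "nat \<Rightarrow> 'a \<Rightarrow> real"
  assumes indep: "indep_vars (\<lambda>_. borel) Z {1..}"
    and ident: "\<And>t. 1 \<le> t \<Longrightarrow> distr M borel (Z t) = distr M borel (Z 1)"
    and meas: "\<And>t. random_variable borel (Z t)"
    and bounded: "\<And>t \<omega>. \<omega> \<in> space M \<Longrightarrow> Z t \<omega> \<in> {a..b}"
  shows "AE \<omega> in M. time_avg (\<lambda>t. Z t \<omega>) \<longlonglongrightarrow> expectation (Z 1)"
proof -
  obtain \<omega> where "\<omega> \<in> space M" using not_empty by blast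
  then have "a < b + 1" using bounded[of \<omega> 1] by simp
  have bounded': "Z t \<omega> \<in> {a..b + 1}" if "\<omega> \<in> space M" for t \<omega>
    using bounded[OF that, of t] by simp
  have "AE \<omega> in M. \<forall>n::nat.
      eventually (\<lambda>T. \<bar>time_avg (\<lambda>t. Z t \<omega>) T - expectation (Z 1)\<bar> < inverse (Suc n)) sequentially"
    unfolding AE_all_countable
    by (intro allI AE_eventually_time_avg_close[OF indep ident meas bounded' \<open>a < b + 1\<close>]) auto
  then show ?thesis
  proof (rule eventually_mono)
    fix \<omega>
    assume close: "\<forall>n::nat. eventually
      (\<lambda>T. \<bar>time_avg (\<lambda>t. Z t \<omega>) T - expectation (Z 1)\<bar> < inverse (Suc n)) sequentially"
    show "time_avg (\<lambda>t. Z t \<omega>) \<longlonglongrightarrow> expectation (Z 1)"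
    proof (rule tendstoI)
      fix e :: real assume "0 < e"
      then obtain n where "inverse (real (Suc n)) < e" using reals_Archimedean by blast
      with close[rule_format, of n]
      show "eventually (\<lambda>T. dist (time_avg (\<lambda>t. Z t \<omega>) T) (expectation (Z 1)) < e) sequentially"
        by (elim eventually_mono) (simp add: dist_real_def)
    qed
  qed
qed


lemma integrable_expectation_eq_of_distr_eq:
  fixes X Y :: "'a \<Rightarrow> real"
  assumes "random_variable borel X" "random_variable borel Y" "distr M borel X = distr M borel Y"
  shows "integrable M X \<longleftrightarrow> integrable M Y" and "expectation X = expectation Y"
  using integrable_distr_eq[OF assms(1), of "\<lambda>x. x"] integrable_distr_eq[OF assms(2), of "\<lambda>x. x"]
    integral_distr[OF assms(1), of "\<lambda>x. x"] integral_distr[OF assms(2), of "\<lambda>x. x"] assms(3)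
  by simp_all

lemma AE_time_avg_min_tendsto:
  fixes X :: "nat \<Rightarrow> 'a \<Rightarrow> real"
  assumes indep: "indep_vars (\<lambda>_. borel) X {1..}"
    and ident: "\<And>t. 1 \<le> t \<Longrightarrow> distr M borel (X t) = distr M borel (X 1)"
    and meas: "\<And>t. random_variable borel (X t)"
    and nonneg: "\<And>t \<omega>. \<omega> \<in> space M \<Longrightarrow> 0 \<le> X t \<omega>"
  shows "AE \<omega> in M. \<forall>L::nat.
    time_avg (\<lambda>t. min (X t \<omega>) (real L)) \<longlonglongrightarrow> expectation (\<lambda>\<omega>. min (X 1 \<omega>) (real L))"
  unfolding AE_all_countable
proof
  fix L :: nat
  have min_meas: "(\<lambda>x. min x (real L)) \<in> borel_measurable borel" by measurable
  show "AE \<omega> in M. time_avg (\<lambda>t. min (X t \<omega>) (real L)) \<longlonglongrightarrow> expectation (\<lambda>\<omega>. min (X 1 \<omega>) (real L))"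
  proof (rule slln_bounded[where a = 0 and b = "real L"])
    show "indep_vars (\<lambda>_. borel) (\<lambda>t \<omega>. min (X t \<omega>) (real L)) {1..}"
      using indep_vars_compose2[OF indep, of "\<lambda>_ x. min x (real L)" "\<lambda>_. borel"] min_meas by simp
    show "distr M borel (\<lambda>\<omega>. min (X t \<omega>) (real L)) = distr M borel (\<lambda>\<omega>. min (X 1 \<omega>) (real L))"
      if "1 \<le> t" for t
      by (rule distr_comp_eq[OF meas meas ident[OF that] min_meas])
    show "random_variable borel (\<lambda>\<omega>. min (X t \<omega>) (real L))" for t
      using meas by measurable
  qed (use nonneg in auto)
qed

lemma integrable_of_expectation_min_le:
  fixes X :: "'a \<Rightarrow> real"
  assumes meas: "random_variable borel X" and nonneg: "\<And>\<omega>. \<omega> \<in> space M \<Longrightarrow> 0 \<le> X \<omega>"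
    and le: "\<And>L::nat. expectation (\<lambda>\<omega>. min (X \<omega>) (real L)) \<le> C"
  shows "integrable M X"
proof -
  have min_nn_integral: "(\<integral>\<^sup>+\<omega>. ennreal (min (X \<omega>) (real L)) \<partial>M) = ennreal (expectation (\<lambda>\<omega>. min (X \<omega>) (real L)))"
    for L :: nat
  proof (rule nn_integral_eq_integral)
    show "integrable M (\<lambda>\<omega>. min (X \<omega>) (real L))"
    proof (rule integrable_const_bound[where B = "real L"])
      show "(\<lambda>\<omega>. min (X \<omega>) (real L)) \<in> borel_measurable M" using meas by measurable
    qed (use nonneg in \<open>auto intro!: AE_I2\<close>)
  qed (use nonneg in \<open>auto intro!: AE_I2\<close>)
  have "(\<lambda>L::nat. \<integral>\<^sup>+\<omega>. ennreal (min (X \<omega>) (real L)) \<partial>M) \<longlonglongrightarrow> (\<integral>\<^sup>+\<omega>. ennreal (X \<omega>) \<partial>M)"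
  proof (rule nn_integral_LIMSEQ)
    show "incseq (\<lambda>L \<omega>. ennreal (min (X \<omega>) (real L)))"
      by (auto simp: incseq_def le_fun_def intro!: ennreal_leI)
    fix \<omega>
    obtain N :: nat where "X \<omega> \<le> real N" using real_arch_simple by blast
    then have "\<forall>\<^sub>F L in sequentially. ennreal (X \<omega>) = ennreal (min (X \<omega>) (real L))"
      unfolding eventually_sequentially by (intro exI[of _ N]) auto
    then show "(\<lambda>L. ennreal (min (X \<omega>) (real L))) \<longlonglongrightarrow> ennreal (X \<omega>)"
      by (rule Lim_transform_eventually[OF tendsto_const])
  next
    show "(\<lambda>\<omega>. ennreal (min (X \<omega>) (real L))) \<in> borel_measurable M" for L :: nat
      using meas by measurable
  qed
  then have "(\<integral>\<^sup>+\<omega>. ennreal (X \<omega>) \<partial>M) \<le> ennreal C"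
    by (rule LIMSEQ_le_const2) (auto simp: min_nn_integral intro!: ennreal_leI le)
  then show ?thesis
    by (intro integrableI_nonneg[OF meas]) (use nonneg in \<open>auto intro!: AE_I2 simp: less_top[symmetric] top_unique\<close>)
qed

lemma nn_integral_lim_time_avg_le:
  fixes X :: "nat \<Rightarrow> 'a \<Rightarrow> real"
  assumes ident: "\<And>t. 1 \<le> t \<Longrightarrow> distr M borel (X t) = distr M borel (X 1)"
    and meas: "\<And>t. random_variable borel (X t)"
    and nonneg: "\<And>t \<omega>. \<omega> \<in> space M \<Longrightarrow> 0 \<le> X t \<omega>"
    and int: "integrable M (X 1)"
    and lim: "AE \<omega> in M. time_avg (\<lambda>t. X t \<omega>) \<longlonglongrightarrow> c \<omega>"
  shows "(\<integral>\<^sup>+\<omega>. ennreal (c \<omega>) \<partial>M) \<le> ennreal (expectation (X 1))"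
proof -
  define E where "E = expectation (X 1)"
  have int_t: "integrable M (X t)" and E_t: "expectation (X t) = E" if "1 \<le> t" for t
    using integrable_expectation_eq_of_distr_eq[OF meas meas ident[OF that]] int by (simp_all add: E_def)
  have avg_nn_integral: "(\<integral>\<^sup>+\<omega>. ennreal (time_avg (\<lambda>t. X t \<omega>) T) \<partial>M) = ennreal E"
    if "1 \<le> T" for T
  proof -
    have "integrable M (\<lambda>\<omega>. time_avg (\<lambda>t. X t \<omega>) T)"
      unfolding time_avg_def by (intro integrable_divide Bochner_Integration.integrable_sum int_t) auto
    then have "(\<integral>\<^sup>+\<omega>. ennreal (time_avg (\<lambda>t. X t \<omega>) T) \<partial>M) = ennreal (expectation (\<lambda>\<omega>. time_avg (\<lambda>t. X t \<omega>) T))"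
      by (rule nn_integral_eq_integral) (use nonneg in \<open>auto intro!: AE_I2 simp: time_avg_def sum_nonneg\<close>)
    also have "expectation (\<lambda>\<omega>. time_avg (\<lambda>t. X t \<omega>) T) = (\<Sum>t=1..T. expectation (X t)) / real T"
      unfolding time_avg_def by (simp add: Bochner_Integration.integral_sum int_t)
    also have "\<dots> = E"
      using that by (simp add: E_t)
    finally show ?thesis .
  qed
  have "(\<integral>\<^sup>+\<omega>. ennreal (c \<omega>) \<partial>M) = (\<integral>\<^sup>+\<omega>. liminf (\<lambda>T. ennreal (time_avg (\<lambda>t. X t \<omega>) T)) \<partial>M)"
  proof (rule nn_integral_cong_AE)
    show "AE \<omega> in M. ennreal (c \<omega>) = liminf (\<lambda>T. ennreal (time_avg (\<lambda>t. X t \<omega>) T))"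
      using lim by (rule eventually_mono) (rule lim_imp_Liminf[symmetric], simp, rule tendsto_ennrealI)
  qed
  also have "\<dots> \<le> liminf (\<lambda>T. \<integral>\<^sup>+\<omega>. ennreal (time_avg (\<lambda>t. X t \<omega>) T) \<partial>M)"
    by (rule nn_integral_liminf) (use borel_measurable_time_avg[OF meas] in measurable)
  also have "\<dots> = ennreal E"
  proof (rule lim_imp_Liminf)
    show "(\<lambda>T. \<integral>\<^sup>+\<omega>. ennreal (time_avg (\<lambda>t. X t \<omega>) T) \<partial>M) \<longlonglongrightarrow> ennreal E"
      by (rule Lim_transform_eventually[OF tendsto_const])
         (auto simp: eventually_sequentially avg_nn_integral intro!: exI[of _ 1])
  qed simp
  finally show ?thesis unfolding E_def .
qed

lemma AE_eq_of_ge_of_nn_integral_le: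
  fixes c :: "'a \<Rightarrow> real"
  assumes meas: "c \<in> borel_measurable M" and ge: "AE \<omega> in M. e \<le> c \<omega>" and "0 \<le> e"
    and le: "(\<integral>\<^sup>+\<omega>. ennreal (c \<omega>) \<partial>M) \<le> ennreal e"
  shows "AE \<omega> in M. c \<omega> = e"
proof -
  have "(\<integral>\<^sup>+\<omega>. ennreal (c \<omega>) \<partial>M) = (\<integral>\<^sup>+\<omega>. ennreal (c \<omega> - e) + ennreal e \<partial>M)"
    using ge \<open>0 \<le> e\<close> by (intro nn_integral_cong_AE) (auto elim!: eventually_mono simp: ennreal_plus[symmetric])
  also have "\<dots> = (\<integral>\<^sup>+\<omega>. ennreal (c \<omega> - e) \<partial>M) + ennreal e"
    using meas by (subst nn_integral_add) (auto simp: emeasure_space_1)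
  finally have "ennreal e + (\<integral>\<^sup>+\<omega>. ennreal (c \<omega> - e) \<partial>M) \<le> ennreal e + 0"
    using le by (simp add: add.commute)
  then have "(\<integral>\<^sup>+\<omega>. ennreal (c \<omega> - e) \<partial>M) = 0"
    by (simp add: ennreal_add_left_cancel_le)
  then have "AE \<omega> in M. ennreal (c \<omega> - e) = 0"
    using meas by (subst (asm) nn_integral_0_iff_AE) auto
  then show ?thesis
    using ge by eventually_elim (auto simp: ennreal_eq_0_iff)
qed

text \<open>
  For unbounded nonnegative \<open>X\<close> the almost sure convergence of the averages is assumed, as in the
  model. The bounded strong law for the truncations \<open>min X L\<close> then yields integrability, and Fatou's
  lemma identifies the limit with the expectation.
\<close>

theorem slln_nonneg_of_convergent:
  fixes X :: "nat \<Rightarrow> 'a \<Rightarrow> real"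
  assumes indep: "indep_vars (\<lambda>_. borel) X {1..}"
    and ident: "\<And>t. 1 \<le> t \<Longrightarrow> distr M borel (X t) = distr M borel (X 1)"
    and meas: "\<And>t. random_variable borel (X t)"
    and nonneg: "\<And>t \<omega>. \<omega> \<in> space M \<Longrightarrow> 0 \<le> X t \<omega>"
    and conv: "AE \<omega> in M. convergent (time_avg (\<lambda>t. X t \<omega>))"
  shows "integrable M (X 1)" and "AE \<omega> in M. time_avg (\<lambda>t. X t \<omega>) \<longlonglongrightarrow> expectation (X 1)"
proof -
  define c where "c \<omega> = lim (time_avg (\<lambda>t. X t \<omega>))" for \<omega>
  have c_meas: "c \<in> borel_measurable M"
    unfolding c_def using borel_measurable_time_avg[OF meas] by measurable
  have lim: "AE \<omega> in M. time_avg (\<lambda>t. X t \<omega>) \<longlonglongrightarrow> c \<omega>"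
    using conv by (rule eventually_mono) (simp add: c_def convergent_LIMSEQ_iff)
  have trunc_le: "AE \<omega> in M. \<forall>L::nat. expectation (\<lambda>\<omega>. min (X 1 \<omega>) (real L)) \<le> c \<omega>"
    using lim AE_time_avg_min_tendsto[OF indep ident meas nonneg, simplified]
  proof eventually_elim
    case (elim \<omega>)
    then show ?case
      by (auto intro!: LIMSEQ_le[OF elim(2)[rule_format] elim(1)] time_avg_mono)
  qed
  then have "AE \<omega> in M. \<exists>\<omega>\<^sub>0. \<forall>L::nat. expectation (\<lambda>\<omega>. min (X 1 \<omega>) (real L)) \<le> c \<omega>\<^sub>0"
    by (rule eventually_mono) blast
  then obtain \<omega>\<^sub>0 where \<omega>\<^sub>0: "\<And>L::nat. expectation (\<lambda>\<omega>. min (X 1 \<omega>) (real L)) \<le> c \<omega>\<^sub>0"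
    by auto
  show int: "integrable M (X 1)"
    by (rule integrable_of_expectation_min_le[OF meas nonneg \<omega>\<^sub>0])
  have "AE \<omega> in M. expectation (X 1) \<le> c \<omega>"
    using trunc_le
  proof (rule eventually_mono)
    fix \<omega> assume "\<forall>L::nat. expectation (\<lambda>\<omega>. min (X 1 \<omega>) (real L)) \<le> c \<omega>"
    then show "expectation (X 1) \<le> c \<omega>"
      by (intro LIMSEQ_le_const2[OF tendsto_integral_min[OF int]]) auto
  qed
  moreover have "0 \<le> expectation (X 1)"
    using nonneg by (simp add: integral_nonneg_AE AE_I2)
  ultimately have "AE \<omega> in M. c \<omega> = expectation (X 1)"
    using nn_integral_lim_time_avg_le[OF ident meas nonneg int lim]
    by (intro AE_eq_of_ge_of_nn_integral_le[OF c_meas])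
  then show "AE \<omega> in M. time_avg (\<lambda>t. X t \<omega>) \<longlonglongrightarrow> expectation (X 1)"
    using lim by eventually_elim simp
qed

end

section \<open>Independent slots and ties\<close>

context prob_space
begin

lemma emeasure_distr_singleton_eq_0:
  assumes "distributed M lborel X f"
  shows "emeasure (distr M borel X) {x} = 0"
proof -
  have f: "f \<in> borel_measurable lborel" and "distr M lborel X = density lborel f"
    using assms by (auto simp: distributed_def)
  moreover have "distr M borel X = distr M lborel X" by (rule distr_cong) auto
  ultimately have "emeasure (distr M borel X) {x} = (\<integral>\<^sup>+y. f y * indicator {x} y \<partial>lborel)"
    by (simp add: emeasure_density[OF f])
  also have "\<dots> = 0"
    by (rule nn_integral_null_set) (simp add: null_sets_def)
  finally show ?thesis .
qed

lemma prob_tie_eq_0: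
  fixes X Y :: "'a \<Rightarrow> real" and g h :: "real \<Rightarrow> real"
  assumes X: "random_variable borel X" and Y: "random_variable borel Y"
    and indep: "indep_var borel Y borel X" and density: "distributed M lborel X f"
    and nonneg: "\<And>\<omega>. \<omega> \<in> space M \<Longrightarrow> 0 \<le> X \<omega>" "\<And>\<omega>. \<omega> \<in> space M \<Longrightarrow> 0 \<le> Y \<omega>"
    and inj: "inj_on g {0..}"
    and [measurable]: "g \<in> borel_measurable borel" "h \<in> borel_measurable borel"
  shows "prob {\<omega> \<in> space M. g (X \<omega>) = h (Y \<omega>)} = 0"
proof -
  define S where "S = {p \<in> space (borel \<Otimes>\<^sub>M borel). 0 \<le> fst p \<and> 0 \<le> snd p \<and> g (snd p) = h (fst p)}"
  have S_sets: "S \<in> sets (borel \<Otimes>\<^sub>M borel)" unfolding S_def by measurable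
  have YX: "(\<lambda>\<omega>. (Y \<omega>, X \<omega>)) \<in> measurable M (borel \<Otimes>\<^sub>M borel)" using X Y by measurable
  interpret PX: prob_space "distr M borel X" by (rule prob_space_distr[OF X])
  \<comment> \<open>By Fubini, the tie probability is the average over \<open>y\<close> of the mass of the at most one
    nonnegative \<open>x\<close> with \<open>g x = h y\<close>.\<close>
  have "emeasure M {\<omega> \<in> space M. g (X \<omega>) = h (Y \<omega>)} = emeasure (distr M (borel \<Otimes>\<^sub>M borel) (\<lambda>\<omega>. (Y \<omega>, X \<omega>))) S"
    using nonneg by (subst emeasure_distr[OF YX S_sets]) (auto intro!: arg_cong[where f = "emeasure M"] simp: S_def space_pair_measure)
  also have "\<dots> = emeasure (distr M borel Y \<Otimes>\<^sub>M distr M borel X) S"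
    using indep unfolding indep_var_distribution_eq by simp
  also have "\<dots> = (\<integral>\<^sup>+y. emeasure (distr M borel X) (Pair y -` S) \<partial>distr M borel Y)"
    by (rule PX.emeasure_pair_measure_alt) (use S_sets in simp)
  also have "\<dots> = (\<integral>\<^sup>+y. 0 \<partial>distr M borel Y)"
  proof (rule nn_integral_cong)
    fix y
    obtain x where "Pair y -` S \<subseteq> {x}"
    proof (cases "Pair y -` S = {}")
      case False
      then obtain x where "x \<in> Pair y -` S" by blast
      then have "Pair y -` S \<subseteq> {x}" using inj by (auto simp: S_def inj_on_def)
      then show ?thesis using that by blast
    qed (use that in blast)
    then have "emeasure (distr M borel X) (Pair y -` S) \<le> emeasure (distr M borel X) {x}"
      by (intro emeasure_mono) auto
    then show "emeasure (distr M borel X) (Pair y -` S) = 0"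
      using emeasure_distr_singleton_eq_0[OF density, of x] by simp
  qed
  finally show ?thesis by (simp add: measure_def)
qed

lemma tendsto_prob_abs_less:
  fixes Y :: "'a \<Rightarrow> real"
  assumes "random_variable borel Y"
  shows "(\<lambda>n. prob {\<omega> \<in> space M. \<bar>Y \<omega>\<bar> < inverse (Suc n)}) \<longlonglongrightarrow> prob {\<omega> \<in> space M. Y \<omega> = 0}"
proof -
  have "(\<lambda>n. prob {\<omega> \<in> space M. \<bar>Y \<omega>\<bar> < inverse (Suc n)}) \<longlonglongrightarrow> prob (\<Inter>n. {\<omega> \<in> space M. \<bar>Y \<omega>\<bar> < inverse (Suc n)})"
  proof (rule finite_Lim_measure_decseq)
    show "range (\<lambda>n. {\<omega> \<in> space M. \<bar>Y \<omega>\<bar> < inverse (Suc n)}) \<subseteq> sets M"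
      using assms by auto
    show "decseq (\<lambda>n. {\<omega> \<in> space M. \<bar>Y \<omega>\<bar> < inverse (Suc n)})"
    proof (rule decseq_SucI)
      fix n
      have "inverse (real (Suc (Suc n))) \<le> inverse (real (Suc n))"
        by (rule le_imp_inverse_le) auto
      then show "{\<omega> \<in> space M. \<bar>Y \<omega>\<bar> < inverse (Suc (Suc n))} \<subseteq> {\<omega> \<in> space M. \<bar>Y \<omega>\<bar> < inverse (Suc n)}"
        by (auto simp del: of_nat_Suc intro: less_le_trans)
    qed
  qed
  moreover have "(\<forall>n. \<bar>y\<bar> < inverse (real (Suc n))) \<longleftrightarrow> y = 0" for y :: real
  proof
    assume small: "\<forall>n. \<bar>y\<bar> < inverse (real (Suc n))"
    show "y = 0"
    proof (rule ccontr)
      assume "y \<noteq> 0"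
      then have "0 < \<bar>y\<bar>" by simp
      then obtain n where "inverse (real (Suc n)) < \<bar>y\<bar>" using reals_Archimedean by blast
      with small show False by (meson not_less_iff_gr_or_eq)
    qed
  qed simp
  then have "(\<Inter>n. {\<omega> \<in> space M. \<bar>Y \<omega>\<bar> < inverse (Suc n)}) = {\<omega> \<in> space M. Y \<omega> = 0}"
    by blast
  ultimately show ?thesis by simp
qed

end

locale iid_slots = prob_space +
  fixes \<phi> :: "'k::finite \<Rightarrow> nat \<Rightarrow> 'a \<Rightarrow> real"
  assumes measurable_slot: "\<And>k t. \<phi> k t \<in> borel_measurable M"
    and indep_slots: "indep_vars (\<lambda>_. borel) (\<lambda>(k, t). \<phi> k t) (UNIV \<times> {1..})"
    and distr_slot: "\<And>k t. 1 \<le> t \<Longrightarrow> distr M borel (\<phi> k t) = distr M borel (\<phi> k 1)"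
begin

lemma measurable_slot_vector: "(\<lambda>\<omega> j. \<phi> j t \<omega>) \<in> measurable M (PiM UNIV (\<lambda>_. borel))"
  by (rule measurable_PiM_single') (use measurable_slot in auto)

lemma indep_vars_users:
  assumes "1 \<le> t"
  shows "indep_vars (\<lambda>_. borel) (\<lambda>j. \<phi> j t) UNIV"
proof -
  have "indep_vars (\<lambda>j. PiM {(j, t)} (\<lambda>_. borel)) (\<lambda>j \<omega>. restrict (\<lambda>i. (\<lambda>(k, t). \<phi> k t) i \<omega>) {(j, t)}) UNIV"
    by (rule indep_vars_restrict[OF indep_slots]) (use assms in \<open>auto simp: disjoint_family_on_def\<close>)
  then have "indep_vars (\<lambda>_. borel) (\<lambda>j \<omega>. (\<lambda>f. f (j, t)) (restrict (\<lambda>i. (\<lambda>(k, t). \<phi> k t) i \<omega>) {(j, t)})) UNIV"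
    by (rule indep_vars_compose2) auto
  then show ?thesis
    by (rule indep_vars_cong[THEN iffD1, rotated -1]) auto
qed

lemma indep_var_users:
  assumes "1 \<le> t" "i \<noteq> j"
  shows "indep_var borel (\<phi> i t) borel (\<phi> j t)"
proof -
  have "indep_var borel ((\<lambda>f. f i) \<circ> (\<lambda>\<omega>. restrict (\<lambda>k. \<phi> k t \<omega>) {i}))
                  borel ((\<lambda>f. f j) \<circ> (\<lambda>\<omega>. restrict (\<lambda>k. \<phi> k t \<omega>) {j}))"
    using assms(2) by (intro indep_var_compose[OF indep_var_restrict[OF indep_vars_users[OF assms(1)]]]) auto
  then show ?thesis by (simp add: comp_def)
qed

lemma distr_slot_vector_eq:
  assumes "1 \<le> t"
  shows "distr M (PiM UNIV (\<lambda>_. borel)) (\<lambda>\<omega> j. \<phi> j t \<omega>) = distr M (PiM UNIV (\<lambda>_. borel)) (\<lambda>\<omega> j. \<phi> j 1 \<omega>)"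
proof -
  have "distr M (PiM UNIV (\<lambda>_. borel)) (\<lambda>\<omega> j. \<phi> j s \<omega>) = PiM UNIV (\<lambda>j. distr M borel (\<phi> j s))"
    if "1 \<le> s" for s
    using indep_vars_iff_distr_eq_PiM[where I = UNIV and M' = "\<lambda>_. borel" and X = "\<lambda>j. \<phi> j s"]
      indep_vars_users[OF that] measurable_slot
    by (simp add: restrict_def)
  from this[OF assms] this[of 1] show ?thesis
    using distr_slot[OF assms] by (simp cong: PiM_cong)
qed

lemma indep_vars_slot_functional:
  assumes G: "G \<in> borel_measurable (PiM UNIV (\<lambda>_. borel))"
  shows "indep_vars (\<lambda>_. borel) (\<lambda>t \<omega>. G (\<lambda>j. \<phi> j t \<omega>)) {1..}"
proof -
  have "indep_vars (\<lambda>t. PiM (UNIV \<times> {t}) (\<lambda>_. borel)) (\<lambda>t \<omega>. restrict (\<lambda>i. (\<lambda>(k, t). \<phi> k t) i \<omega>) (UNIV \<times> {t})) {1..}"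
    by (rule indep_vars_restrict[OF indep_slots]) (auto simp: disjoint_family_on_def)
  moreover have "(\<lambda>f. G (\<lambda>j. f (j, t))) \<in> borel_measurable (PiM (UNIV \<times> {t}) (\<lambda>_. borel))" for t :: nat
    by (rule measurable_compose[OF _ G], rule measurable_PiM_single') auto
  ultimately have "indep_vars (\<lambda>_. borel)
      (\<lambda>t \<omega>. (\<lambda>f. G (\<lambda>j. f (j, t))) (restrict (\<lambda>i. (\<lambda>(k, t). \<phi> k t) i \<omega>) (UNIV \<times> {t}))) {1..}"
    by (rule indep_vars_compose2)
  then show ?thesis
    by (rule indep_vars_cong[THEN iffD1, rotated -1]) auto
qed

lemma distr_slot_functional_eq:
  assumes "G \<in> borel_measurable (PiM UNIV (\<lambda>_. borel))" "1 \<le> t"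
  shows "distr M borel (\<lambda>\<omega>. G (\<lambda>j. \<phi> j t \<omega>)) = distr M borel (\<lambda>\<omega>. G (\<lambda>j. \<phi> j 1 \<omega>))"
  by (rule distr_comp_eq[OF measurable_slot_vector measurable_slot_vector distr_slot_vector_eq[OF assms(2)] assms(1)])

lemma AE_time_avg_event_tendsto:
  assumes P: "Measurable.pred (PiM UNIV (\<lambda>_. borel)) P"
  shows "AE \<omega> in M. time_avg (\<lambda>t. of_bool (P (\<lambda>j. \<phi> j t \<omega>))) \<longlonglongrightarrow> prob {\<omega> \<in> space M. P (\<lambda>j. \<phi> j 1 \<omega>)}"
proof -
  have G: "(\<lambda>s. of_bool (P s) :: real) \<in> borel_measurable (PiM UNIV (\<lambda>_. borel))"
    using P by measurable
  have expectation_eq: "expectation (\<lambda>\<omega>. of_bool (P (\<lambda>j. \<phi> j 1 \<omega>))) = prob {\<omega> \<in> space M. P (\<lambda>j. \<phi> j 1 \<omega>)}"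
    by (subst Bochner_Integration.integral_cong[where g = "indicator {\<omega> \<in> space M. P (\<lambda>j. \<phi> j 1 \<omega>)}"])
       (auto simp: indicator_def Int_absorb2 Collect_subset)
  have "AE \<omega> in M. time_avg (\<lambda>t. of_bool (P (\<lambda>j. \<phi> j t \<omega>))) \<longlonglongrightarrow> expectation (\<lambda>\<omega>. of_bool (P (\<lambda>j. \<phi> j 1 \<omega>)))"
  proof (rule slln_bounded[where a = 0 and b = 1])
    show "indep_vars (\<lambda>_. borel) (\<lambda>t \<omega>. of_bool (P (\<lambda>j. \<phi> j t \<omega>)) :: real) {1..}"
      by (rule indep_vars_slot_functional[OF G])
    show "distr M borel (\<lambda>\<omega>. of_bool (P (\<lambda>j. \<phi> j t \<omega>)) :: real)
        = distr M borel (\<lambda>\<omega>. of_bool (P (\<lambda>j. \<phi> j 1 \<omega>)))"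
      if "1 \<le> t" for t
      by (rule distr_slot_functional_eq[OF G that])
    show "random_variable borel (\<lambda>\<omega>. of_bool (P (\<lambda>j. \<phi> j t \<omega>)) :: real)" for t
      by (rule measurable_compose[OF measurable_slot_vector G])
  qed auto
  then show ?thesis unfolding expectation_eq .
qed

lemma prob_near_tie_tendsto_0:
  assumes "0 < D" "0 < B" "\<And>k. 0 < w k"
    and density: "\<And>k. \<exists>f. distributed M lborel (\<phi> k 1) f"
    and nonneg: "\<And>k \<omega>. \<omega> \<in> space M \<Longrightarrow> 0 \<le> \<phi> k 1 \<omega>"
  shows "(\<lambda>n. prob {\<omega> \<in> space M. near_tie D B w (inverse (Suc n)) (\<lambda>j. \<phi> j 1 \<omega>)}) \<longlonglongrightarrow> 0"
proof -
  define gap where "gap p \<omega> = w (fst p) * slot_rate D B (\<phi> (fst p) 1 \<omega>) - w (snd p) * slot_rate D B (\<phi> (snd p) 1 \<omega>)"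
    for p :: "'k \<times> 'k" and \<omega>
  define P where "P = {p :: 'k \<times> 'k. fst p \<noteq> snd p}"
  have gap_meas: "random_variable borel (gap p)" for p
    unfolding gap_def slot_rate_def using measurable_slot by measurable
  have tie_0: "prob {\<omega> \<in> space M. gap p \<omega> = 0} = 0" if "p \<in> P" for p
  proof -
    obtain i j where p: "p = (i, j)" and "i \<noteq> j" using \<open>p \<in> P\<close> by (cases p) (auto simp: P_def)
    obtain f where "distributed M lborel (\<phi> i 1) f" using density by blast
    moreover have "inj_on (\<lambda>x. w i * slot_rate D B x) {0..}"
      using slot_rate_inj[OF assms(1,2)] assms(3)[of i] by (auto intro!: inj_onI)
    ultimately have "prob {\<omega> \<in> space M. w i * slot_rate D B (\<phi> i 1 \<omega>) = w j * slot_rate D B (\<phi> j 1 \<omega>)} = 0"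
      using indep_var_users[of 1 j i] \<open>i \<noteq> j\<close> measurable_slot nonneg
      by (intro prob_tie_eq_0) (auto simp: slot_rate_def)
    then show ?thesis by (simp add: gap_def p)
  qed
  have "(\<lambda>n. \<Sum>p\<in>P. prob {\<omega> \<in> space M. \<bar>gap p \<omega>\<bar> < inverse (Suc n)})
      \<longlonglongrightarrow> (\<Sum>p\<in>P. prob {\<omega> \<in> space M. gap p \<omega> = 0})"
    by (intro tendsto_sum tendsto_prob_abs_less gap_meas)
  also have "(\<Sum>p\<in>P. prob {\<omega> \<in> space M. gap p \<omega> = 0}) = 0"
    using tie_0 by simp
  finally have sum_lim: "(\<lambda>n. \<Sum>p\<in>P. prob {\<omega> \<in> space M. \<bar>gap p \<omega>\<bar> < inverse (Suc n)}) \<longlonglongrightarrow> 0" .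
  show ?thesis
  proof (rule real_tendsto_sandwich[OF _ _ tendsto_const sum_lim])
    have near_eq: "{\<omega> \<in> space M. near_tie D B w (inverse (Suc n)) (\<lambda>j. \<phi> j 1 \<omega>)}
        = (\<Union>p\<in>P. {\<omega> \<in> space M. \<bar>gap p \<omega>\<bar> < inverse (Suc n)})" for n
      by (auto simp: near_tie_def gap_def P_def) blast
    have "prob {\<omega> \<in> space M. near_tie D B w (inverse (Suc n)) (\<lambda>j. \<phi> j 1 \<omega>)}
        \<le> (\<Sum>p\<in>P. prob {\<omega> \<in> space M. \<bar>gap p \<omega>\<bar> < inverse (Suc n)})" for n
      unfolding near_eq using gap_meas by (intro finite_measure_subadditive_finite) auto
    then show "\<forall>\<^sub>F n in sequentially. prob {\<omega> \<in> space M. near_tie D B w (inverse (Suc n)) (\<lambda>j. \<phi> j 1 \<omega>)}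
        \<le> (\<Sum>p\<in>P. prob {\<omega> \<in> space M. \<bar>gap p \<omega>\<bar> < inverse (Suc n)})"
      by simp
  qed simp
qed

lemma slln_slot_functional_nonneg:
  assumes G: "G \<in> borel_measurable (PiM UNIV (\<lambda>_. borel))" and nonneg: "\<And>s. 0 \<le> G s"
    and conv: "AE \<omega> in M. convergent (time_avg (\<lambda>t. G (\<lambda>j. \<phi> j t \<omega>)))"
  shows "integrable M (\<lambda>\<omega>. G (\<lambda>j. \<phi> j 1 \<omega>))"
    and "AE \<omega> in M. time_avg (\<lambda>t. G (\<lambda>j. \<phi> j t \<omega>)) \<longlonglongrightarrow> expectation (\<lambda>\<omega>. G (\<lambda>j. \<phi> j 1 \<omega>))"
    and "AE \<omega> in M. \<forall>L::nat. time_avg (\<lambda>t. min (G (\<lambda>j. \<phi> j t \<omega>)) (real L))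
           \<longlonglongrightarrow> expectation (\<lambda>\<omega>. min (G (\<lambda>j. \<phi> j 1 \<omega>)) (real L))"
proof -
  have indep: "indep_vars (\<lambda>_. borel) (\<lambda>t \<omega>. G (\<lambda>j. \<phi> j t \<omega>)) {1..}"
    by (rule indep_vars_slot_functional[OF G])
  have ident: "distr M borel (\<lambda>\<omega>. G (\<lambda>j. \<phi> j t \<omega>)) = distr M borel (\<lambda>\<omega>. G (\<lambda>j. \<phi> j 1 \<omega>))" if "1 \<le> t" for t
    by (rule distr_slot_functional_eq[OF G that])
  have meas: "random_variable borel (\<lambda>\<omega>. G (\<lambda>j. \<phi> j t \<omega>))" for t
    by (rule measurable_compose[OF measurable_slot_vector G])
  show "integrable M (\<lambda>\<omega>. G (\<lambda>j. \<phi> j 1 \<omega>))"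
    and "AE \<omega> in M. time_avg (\<lambda>t. G (\<lambda>j. \<phi> j t \<omega>)) \<longlonglongrightarrow> expectation (\<lambda>\<omega>. G (\<lambda>j. \<phi> j 1 \<omega>))"
    using slln_nonneg_of_convergent[where X = "\<lambda>t \<omega>. G (\<lambda>j. \<phi> j t \<omega>)", OF indep ident meas nonneg conv]
    by simp_all
  show "AE \<omega> in M. \<forall>L::nat. time_avg (\<lambda>t. min (G (\<lambda>j. \<phi> j t \<omega>)) (real L))
           \<longlonglongrightarrow> expectation (\<lambda>\<omega>. min (G (\<lambda>j. \<phi> j 1 \<omega>)) (real L))"
    using AE_time_avg_min_tendsto[where X = "\<lambda>t \<omega>. G (\<lambda>j. \<phi> j t \<omega>)", OF indep ident meas nonneg]
    by simp
qed

end

theorem corollary1: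
  fixes M :: "'a measure"
    and \<phi> :: "'k::finite \<Rightarrow> nat \<Rightarrow> 'a \<Rightarrow> real"
    and \<Delta>0 B :: real
    and w :: "'k \<Rightarrow> real"
    and mu :: "('k \<Rightarrow> real) \<Rightarrow> ('k \<Rightarrow> real)"
  assumes "prob_space M"
    and "\<Delta>0 > 0" and "B > 0"
    and meas: "\<And>k t. \<phi> k t \<in> borel_measurable M"
    and nonneg: "\<And>k t \<omega>. t \<ge> 1 \<Longrightarrow> \<omega> \<in> space M \<Longrightarrow> \<phi> k t \<omega> \<ge> 0"
    and indep: "prob_space.indep_vars M (\<lambda>_. borel) (\<lambda>(k, t). \<phi> k t) (UNIV \<times> {1..})"
    and ident: "\<And>k t. t \<ge> 1 \<Longrightarrow> distr M borel (\<phi> k t) = distr M borel (\<phi> k 1)"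
    and cont: "\<And>k. \<exists>f. distributed M lborel (\<phi> k 1) f"
    and wpos: "\<And>k. w k > 0"
    and wnorm: "sqrt (\<Sum>k\<in>UNIV. (w k)\<^sup>2) = 1"
    and mw: "max_weight_scheduler \<Delta>0 B w mu"
    and lim_exists: "AE \<omega> in M. \<forall>k. convergent
        (avg_rate \<Delta>0 B (\<lambda>t. mu (\<lambda>j. \<phi> j t \<omega>)) (\<lambda>j t. \<phi> j t \<omega>) k)"
  shows "AE \<omega> in M.
     argmax_inner w (feasible_region \<Delta>0 B (\<lambda>j t. \<phi> j t \<omega>)) =
       {(\<lambda>k. lim (avg_rate \<Delta>0 B (\<lambda>t. mu (\<lambda>j. \<phi> j t \<omega>)) (\<lambda>j t. \<phi> j t \<omega>) k))}"
proof -
  interpret iid_slots M \<phi>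
    by (intro iid_slots.intro iid_slots_axioms.intro assms(1) meas indep ident)
  have "AE \<omega> in M. convergent (time_avg (\<lambda>t. max_weight_value \<Delta>0 B w (\<lambda>j. \<phi> j t \<omega>)))"
    using lim_exists by (rule eventually_mono) (auto intro: convergent_time_avg_max_weight_value[OF mw])
  note value_slln = slln_slot_functional_nonneg[OF borel_measurable_max_weight_value max_weight_value_nonneg this]
  have ties: "AE \<omega> in M. \<forall>n. time_avg (\<lambda>t. of_bool (near_tie \<Delta>0 B w (inverse (Suc n)) (\<lambda>j. \<phi> j t \<omega>)))
      \<longlonglongrightarrow> prob {\<omega> \<in> space M. near_tie \<Delta>0 B w (inverse (Suc n)) (\<lambda>j. \<phi> j 1 \<omega>)}"
    unfolding AE_all_countable by (intro allI AE_time_avg_event_tendsto pred_near_tie)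
  have ties_lim: "(\<lambda>n. prob {\<omega> \<in> space M. near_tie \<Delta>0 B w (inverse (Suc n)) (\<lambda>j. \<phi> j 1 \<omega>)}) \<longlonglongrightarrow> 0"
    by (rule prob_near_tie_tendsto_0[OF assms(2,3) wpos cont]) (use nonneg in simp)
  have "AE \<omega> in M. \<forall>k t. 1 \<le> t \<longrightarrow> 0 \<le> \<phi> k t \<omega>"
    using nonneg by (intro AE_I2) blast
  then show ?thesis
    using lim_exists value_slln(2,3) ties
  proof eventually_elim
    case (elim \<omega>)
    show ?case
      by (rule argmax_feasible_region_eq_max_weight_rates[where
            m = "\<lambda>L. expectation (\<lambda>\<omega>. min (max_weight_value \<Delta>0 B w (\<lambda>j. \<phi> j 1 \<omega>)) (real L))"
            and \<eta> = "\<lambda>n. inverse (real (Suc n))"])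
         (use elim assms(2,3) wpos mw tendsto_integral_min[OF value_slln(1)] ties_lim
            LIMSEQ_inverse_real_of_nat in simp_all)
  qed
qed

end
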